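(* Let $n \geq 1$, let $S^{n-1}$ be the topological $(n-1)$-sphere with a base point $\ast$, regarded as a pseudotopological space, and let $[0,1]$ be the topological interval. Let $\Sigma S^{n-1}$ be the pseudotopological based suspension, i.e. the quotient of $S^{n-1}\times[0,1]$ in $\mathbf{PsTop}$ by the relation $(x,k) \sim (x',k) \sim (\ast, t)$ for all $x,x' \in S^{n-1}$, $k \in \{0,1\}$, $t\in[0,1]$. Then the quotient pseudotopology on $\Sigma S^{n-1}$ coincides with the pseudotopology induced by the quotient topology, and $\Sigma S^{n-1} \cong (S^n, \tau)$, where $(S^n,\tau)$ is the topological $n$-sphere regarded as a pseudotopological space.
   Context: A convergence space is a set $X$ with a relation between filters on $X$ and points (written $\lambda\to x$) such that $\lambda\to x$ and $\lambda\subseteq\lambda'$ imply $\lambda'\to x$, and the principal ultrafilter $\dot x\to x$. It is pseudotopological iff $\lambda\to x$ holds exactly when every ultrafilter containing $\lambda$ converges to $x$. Continuous maps: $\lambda\to x$ implies $f(\lambda)\to f(x)$, where $f(\lambda)$ is generated by images. $\mathbf{PsTop}$ is the category of pseudotopological spaces and continuous maps. A topological space is regarded as a pseudotopological space by $\lambda\to x$ iff $\lambda$ contains the neighbourhood filter of $x$. Products carry the initial structure with respect to projections; the quotient by a surjection $q$ in $\mathbf{PsTop}$ carries the final pseudotopology, i.e. the finest pseudotopology making $q$ continuous. *)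

theory Defs
  imports "HOL-Analysis.Analysis"
begin

text \<open>Convergence spaces are modelled on a carrier set X (of some type 'a) together with a
relation c :: 'a filter => 'a => bool, "c F x" meaning "F converges to x".  Note: in HOL, G \<le> F means G is finer,
i.e. F \<subseteq> G as families of sets.\<close>

definition filter_on :: "'a set \<Rightarrow> 'a filter \<Rightarrow> bool" where
  "filter_on X F \<longleftrightarrow> F \<noteq> bot \<and> eventually (\<lambda>x. x \<in> X) F"

definition ultrafilter_on :: "'a set \<Rightarrow> 'a filter \<Rightarrow> bool" where
  "ultrafilter_on X U \<longleftrightarrow> filter_on X U \<and> (\<forall>G. filter_on X G \<and> G \<le> U \<longrightarrow> G = U)"

definition conv_space :: "'a set \<Rightarrow> ('a filter \<Rightarrow> 'a \<Rightarrow> bool) \<Rightarrow> bool" where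
  "conv_space X c \<longleftrightarrow>
     (\<forall>F x. c F x \<longrightarrow> x \<in> X \<and> filter_on X F) \<and>
     (\<forall>F G x. c F x \<and> filter_on X G \<and> G \<le> F \<longrightarrow> c G x) \<and>
     (\<forall>x\<in>X. c (principal {x}) x)"

definition pstop :: "'a set \<Rightarrow> ('a filter \<Rightarrow> 'a \<Rightarrow> bool) \<Rightarrow> bool" where
  "pstop X c \<longleftrightarrow> conv_space X c \<and>
     (\<forall>F x. filter_on X F \<and> x \<in> X \<longrightarrow>
        (c F x \<longleftrightarrow> (\<forall>U. ultrafilter_on X U \<and> U \<le> F \<longrightarrow> c U x)))"

definition conv_continuous ::
  "'a set \<Rightarrow> ('a filter \<Rightarrow> 'a \<Rightarrow> bool) \<Rightarrow> 'b set \<Rightarrow> ('b filter \<Rightarrow> 'b \<Rightarrow> bool) \<Rightarrow> ('a \<Rightarrow> 'b) \<Rightarrow> bool" where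
  "conv_continuous X c Y d f \<longleftrightarrow> f ` X \<subseteq> Y \<and> (\<forall>F x. c F x \<longrightarrow> d (filtermap f F) (f x))"

definition conv_of_top :: "'a topology \<Rightarrow> 'a filter \<Rightarrow> 'a \<Rightarrow> bool" where
  "conv_of_top T F x \<longleftrightarrow> x \<in> topspace T \<and> filter_on (topspace T) F \<and> F \<le> nhdsin T x"

definition prod_conv ::
  "'a set \<Rightarrow> ('a filter \<Rightarrow> 'a \<Rightarrow> bool) \<Rightarrow> 'b set \<Rightarrow> ('b filter \<Rightarrow> 'b \<Rightarrow> bool)
    \<Rightarrow> ('a \<times> 'b) filter \<Rightarrow> 'a \<times> 'b \<Rightarrow> bool" where
  "prod_conv X c Y d F p \<longleftrightarrow> p \<in> X \<times> Y \<and> filter_on (X \<times> Y) F \<and>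
     c (filtermap fst F) (fst p) \<and> d (filtermap snd F) (snd p)"

text \<open>Quotient in PsTop by a surjection q : X -> Y: the finest pseudotopology on Y making q
continuous, obtained as the intersection of all pseudotopologies on Y making q continuous.\<close>
definition quotient_conv ::
  "'a set \<Rightarrow> ('a filter \<Rightarrow> 'a \<Rightarrow> bool) \<Rightarrow> ('a \<Rightarrow> 'b) \<Rightarrow> 'b set \<Rightarrow> 'b filter \<Rightarrow> 'b \<Rightarrow> bool" where
  "quotient_conv X c q Y G y \<longleftrightarrow> filter_on Y G \<and> y \<in> Y \<and>
     (\<forall>d. pstop Y d \<and> conv_continuous X c Y d q \<longrightarrow> d G y)"

definition quotient_top :: "'a topology \<Rightarrow> ('a \<Rightarrow> 'b) \<Rightarrow> 'b set \<Rightarrow> 'b topology" where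
  "quotient_top T q Y = topology (\<lambda>U. U \<subseteq> Y \<and> openin T {x \<in> topspace T. q x \<in> U})"

definition conv_homeomorphic ::
  "'a set \<Rightarrow> ('a filter \<Rightarrow> 'a \<Rightarrow> bool) \<Rightarrow> 'b set \<Rightarrow> ('b filter \<Rightarrow> 'b \<Rightarrow> bool) \<Rightarrow> bool" where
  "conv_homeomorphic X c Y d \<longleftrightarrow> (\<exists>f g. conv_continuous X c Y d f \<and> conv_continuous Y d X c g \<and>
      (\<forall>x\<in>X. g (f x) = x) \<and> (\<forall>y\<in>Y. f (g y) = y))"

text \<open>The equivalence relation generated by (x,k) ~ (x',k) ~ (b,t), k in {0,1}:
all points of S \<times> {0,1} \<union> {b} \<times> [0,1] are identified, nothing else.\<close>
definition susp_collapsed :: "'a set \<Rightarrow> 'a \<Rightarrow> ('a \<times> real) set" where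
  "susp_collapsed S b = (S \<times> {0, 1}) \<union> ({b} \<times> {0..1})"

definition susp_rel :: "'a set \<Rightarrow> 'a \<Rightarrow> (('a \<times> real) \<times> ('a \<times> real)) set" where
  "susp_rel S b = {(p, p'). p \<in> S \<times> {0..1} \<and> p' \<in> S \<times> {0..1} \<and>
      (p = p' \<or> (p \<in> susp_collapsed S b \<and> p' \<in> susp_collapsed S b))}"

definition susp_quot :: "'a set \<Rightarrow> 'a \<Rightarrow> 'a \<times> real \<Rightarrow> ('a \<times> real) set" where
  "susp_quot S b p = susp_rel S b `` {p}"

definition susp_space :: "'a set \<Rightarrow> 'a \<Rightarrow> ('a \<times> real) set set" where
  "susp_space S b = (S \<times> {0..1}) // susp_rel S b"

end

theory Submission
  imports Defs
begin

(* If the quotient map q of a topological space onto its topological quotient Q is perfect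
   (continuous, closed, onto, with compact fibres), the pseudotopological quotient agrees with Q:
   an ultrafilter converging to y in Q refines the image of the neighbourhood filter of some point
   of the compact fibre over y, since otherwise finitely many open sets avoided by the ultrafilter
   would cover the fibre, and as q is closed their union would contain the preimage of an open
   neighbourhood of y.  Any pseudotopology making q continuous therefore contains all convergences
   of Q.

   For the suspension, S^(n-1) \<times> [0,1] minus the collapsed set S^(n-1) \<times> {0,1} \<union> {*} \<times> [0,1]
   is (S^(n-1) - {*}) \<times> (0,1), homeomorphic to a hyperplane times the line and thus to S^n minus
   a point N.  Extending this homeomorphism by N on the collapsed set gives a continuous map onto
   S^n with the same fibres as the quotient map.  As S^(n-1) \<times> [0,1] is compact and S^n is
   Hausdorff, it identifies the topological quotient with S^n, and the quotient map is perfect. *)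

section \<open>Ultrafilters on a set\<close>

lemma filter_on_Inf_chain:
  assumes "C \<noteq> {}" and filters: "\<And>G. G \<in> C \<Longrightarrow> filter_on Y G"
    and chain: "\<And>G H. G \<in> C \<Longrightarrow> H \<in> C \<Longrightarrow> G \<le> H \<or> H \<le> G"
  shows "filter_on Y (Inf C)"
proof -
  have ev: "eventually P (Inf C) \<longleftrightarrow> (\<exists>G\<in>C. eventually P G)" for P
    by (rule eventually_Inf_base[OF \<open>C \<noteq> {}\<close>]) (metis chain inf.absorb1 inf.absorb2)
  show ?thesis
    using filters \<open>C \<noteq> {}\<close> unfolding filter_on_def trivial_limit_def ev by blast
qed

lemma ultrafilter_on_exists:
  assumes "filter_on Y F"
  obtains U where "ultrafilter_on Y U" "U \<le> F"
proof -
  let ?A = "{G. filter_on Y G \<and> G \<le> F}"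
  have "\<exists>U\<in>?A. \<forall>G\<in>?A. G \<le> U \<longrightarrow> G = U"
  proof (rule predicate_Zorn)
    show "partial_order_on ?A (relation_of (\<lambda>G H. H \<le> G) ?A)"
      by (rule partial_order_on_relation_ofI) auto
    fix C assume "C \<in> Chains (relation_of (\<lambda>G H. H \<le> G) ?A)"
    then have C: "C \<subseteq> ?A" and chain: "\<And>G H. G \<in> C \<Longrightarrow> H \<in> C \<Longrightarrow> G \<le> H \<or> H \<le> G"
      unfolding Chains_def relation_of_def by auto
    show "\<exists>U\<in>?A. \<forall>G\<in>C. U \<le> G"
    proof (cases "C = {}")
      case True
      then show ?thesis using assms by auto
    next
      case False
      then obtain G where "G \<in> C" by blast
      then have "Inf C \<le> F" using C Inf_lower[of G C] by auto
      moreover have "filter_on Y (Inf C)" using False C chain by (intro filter_on_Inf_chain) auto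
      ultimately show ?thesis by (auto intro: Inf_lower)
    qed
  qed
  then obtain U where U: "filter_on Y U" "U \<le> F"
    and maximal: "\<And>G. filter_on Y G \<Longrightarrow> G \<le> F \<Longrightarrow> G \<le> U \<Longrightarrow> G = U"
    by blast
  have "ultrafilter_on Y U"
    unfolding ultrafilter_on_def using U maximal order_trans[OF _ U(2)] by blast
  then show ?thesis using U(2) by (rule that)
qed

lemma ultrafilter_on_imp_filter_on: "ultrafilter_on Y U \<Longrightarrow> filter_on Y U"
  by (simp add: ultrafilter_on_def)

lemma ultrafilter_on_neq_bot: "ultrafilter_on Y U \<Longrightarrow> U \<noteq> bot"
  by (simp add: ultrafilter_on_def filter_on_def)

lemma filter_on_inf_principal_Compl:
  assumes "filter_on Y F" "\<not> eventually (\<lambda>y. y \<in> A) F"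
  shows "filter_on Y (inf F (principal (- A)))"
  using assms
  by (auto simp: filter_on_def eventually_inf_principal trivial_limit_def elim: eventually_mono)

lemma ultrafilter_on_eventually_mem_or_not:
  assumes "ultrafilter_on Y U"
  shows "eventually (\<lambda>y. y \<in> A) U \<or> eventually (\<lambda>y. y \<notin> A) U"
proof (cases "eventually (\<lambda>y. y \<in> A) U")
  case False
  with ultrafilter_on_imp_filter_on[OF assms] have "filter_on Y (inf U (principal (- A)))"
    by (rule filter_on_inf_principal_Compl)
  then have "inf U (principal (- A)) = U"
    using assms inf_le1[of U "principal (- A)"] unfolding ultrafilter_on_def by blast
  then have "U \<le> principal (- A)" unfolding le_iff_inf .
  then show ?thesis by (simp add: le_principal)
qed simp

section \<open>Topological spaces as pseudotopological spaces\<close>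

lemma le_nhdsin_iff:
  assumes "x \<in> topspace T"
  shows "F \<le> nhdsin T x \<longleftrightarrow> (\<forall>U. openin T U \<and> x \<in> U \<longrightarrow> eventually (\<lambda>y. y \<in> U) F)"
  using assms by (auto simp: nhdsin_def le_INF_iff le_principal)

lemma le_nhdsinD:
  assumes "F \<le> nhdsin T x" "openin T U" "x \<in> U"
  shows "eventually (\<lambda>y. y \<in> U) F"
proof -
  have "eventually (\<lambda>y. y \<in> U) (nhdsin T x)" using assms(2,3) by (auto simp: eventually_nhdsin)
  then show ?thesis using assms(1) by (simp add: le_filter_def)
qed

lemma conv_of_top_nhdsin:
  assumes "x \<in> topspace T"
  shows "conv_of_top T (nhdsin T x) x"
  using assms by (auto simp: conv_of_top_def filter_on_def eventually_nhdsin trivial_limit_def)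

lemma conv_of_top_mono:
  assumes "conv_of_top T F x" "filter_on (topspace T) G" "G \<le> F"
  shows "conv_of_top T G x"
  using assms order_trans[OF assms(3)] unfolding conv_of_top_def by blast

lemma conv_of_top_if_ultrafilters:
  assumes F: "filter_on (topspace T) F" and x: "x \<in> topspace T"
    and ultra: "\<And>U. ultrafilter_on (topspace T) U \<Longrightarrow> U \<le> F \<Longrightarrow> conv_of_top T U x"
  shows "conv_of_top T F x"
proof -
  have "eventually (\<lambda>y. y \<in> V) F" if V: "openin T V" "x \<in> V" for V
  proof (rule ccontr)
    assume "\<not> eventually (\<lambda>y. y \<in> V) F"
    with F have "filter_on (topspace T) (inf F (principal (- V)))"
      by (rule filter_on_inf_principal_Compl)
    then obtain U where U: "ultrafilter_on (topspace T) U" "U \<le> inf F (principal (- V))"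
      by (rule ultrafilter_on_exists)
    then have "conv_of_top T U x" using ultra by simp
    then have "eventually (\<lambda>y. y \<in> V) U" using V by (auto simp: conv_of_top_def dest: le_nhdsinD)
    moreover have "eventually (\<lambda>y. y \<notin> V) U" using U(2) by (simp add: le_principal)
    ultimately have "eventually (\<lambda>_. False) U" by eventually_elim simp
    then show False using ultrafilter_on_neq_bot[OF U(1)] by (simp add: trivial_limit_def)
  qed
  then show ?thesis using F x by (simp add: conv_of_top_def le_nhdsin_iff)
qed

lemma pstop_conv_of_top: "pstop (topspace T) (conv_of_top T)"
proof -
  have domain: "\<forall>F x. conv_of_top T F x \<longrightarrow> x \<in> topspace T \<and> filter_on (topspace T) F"
    by (simp add: conv_of_top_def)
  have mono: "\<forall>F G x. conv_of_top T F x \<and> filter_on (topspace T) G \<and> G \<le> F \<longrightarrow> conv_of_top T G x"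
    by (meson conv_of_top_mono)
  have principal: "\<forall>x\<in>topspace T. conv_of_top T (principal {x}) x"
  proof
    fix x assume x: "x \<in> topspace T"
    then show "conv_of_top T (principal {x}) x"
      unfolding conv_of_top_def filter_on_def le_nhdsin_iff[OF x]
      by (simp add: eventually_principal principal_eq_bot_iff)
  qed
  have ultrafilters: "\<forall>F x. filter_on (topspace T) F \<and> x \<in> topspace T \<longrightarrow>
      (conv_of_top T F x \<longleftrightarrow> (\<forall>U. ultrafilter_on (topspace T) U \<and> U \<le> F \<longrightarrow> conv_of_top T U x))"
  proof (intro allI impI)
    fix F x assume Fx: "filter_on (topspace T) F \<and> x \<in> topspace T"
    show "conv_of_top T F x \<longleftrightarrow> (\<forall>U. ultrafilter_on (topspace T) U \<and> U \<le> F \<longrightarrow> conv_of_top T U x)"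
    proof
      assume conv: "conv_of_top T F x"
      show "\<forall>U. ultrafilter_on (topspace T) U \<and> U \<le> F \<longrightarrow> conv_of_top T U x"
      proof (intro allI impI)
        fix U assume "ultrafilter_on (topspace T) U \<and> U \<le> F"
        then show "conv_of_top T U x"
          using conv_of_top_mono[OF conv ultrafilter_on_imp_filter_on] by blast
      qed
    next
      assume "\<forall>U. ultrafilter_on (topspace T) U \<and> U \<le> F \<longrightarrow> conv_of_top T U x"
      then show "conv_of_top T F x"
        using conv_of_top_if_ultrafilters[OF conjunct1[OF Fx] conjunct2[OF Fx]] by blast
    qed
  qed
  show ?thesis
    unfolding pstop_def conv_space_def by (intro conjI domain mono principal ultrafilters)
qed

lemma filtermap_nhdsin_le:
  assumes "continuous_map X Y f"
  shows "filtermap f (nhdsin X x) \<le> nhdsin Y (f x)"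
proof (cases "x \<in> topspace X")
  case True
  have "eventually (\<lambda>y. f y \<in> V) (nhdsin X x)" if "openin Y V" "f x \<in> V" for V
    unfolding eventually_nhdsin using assms that True
    by (intro disjI2 exI[of _ "{x \<in> topspace X. f x \<in> V}"]) (auto simp: continuous_map_def)
  moreover have "f x \<in> topspace Y" using assms True by (auto simp: continuous_map_def)
  ultimately show ?thesis by (simp add: le_nhdsin_iff eventually_filtermap)
qed simp

lemma conv_continuous_conv_of_top:
  assumes "continuous_map X Y f"
  shows "conv_continuous (topspace X) (conv_of_top X) (topspace Y) (conv_of_top Y) f"
  unfolding conv_continuous_def
proof (intro conjI allI impI)
  show "f ` topspace X \<subseteq> topspace Y" using assms by (rule continuous_map_image_subset_topspace)
  fix F x assume "conv_of_top X F x"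
  then have "x \<in> topspace X" "filter_on (topspace X) F" "filtermap f F \<le> nhdsin Y (f x)"
    using order_trans[OF filtermap_mono filtermap_nhdsin_le[OF assms]]
    unfolding conv_of_top_def by auto
  then show "conv_of_top Y (filtermap f F) (f x)" using assms
    by (auto simp: conv_of_top_def filter_on_def filtermap_bot_iff eventually_filtermap
        continuous_map_def elim: eventually_mono)
qed

lemma conv_homeomorphic_conv_of_top:
  assumes "X homeomorphic_space Y"
  shows "conv_homeomorphic (topspace X) (conv_of_top X) (topspace Y) (conv_of_top Y)"
  using assms unfolding homeomorphic_space_def homeomorphic_maps_def conv_homeomorphic_def
  by (metis conv_continuous_conv_of_top)

lemma prod_conv_conv_of_top:
  "prod_conv (topspace X) (conv_of_top X) (topspace Y) (conv_of_top Y) = conv_of_top (prod_topology X Y)"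
proof (intro ext iffI)
  fix F p assume "prod_conv (topspace X) (conv_of_top X) (topspace Y) (conv_of_top Y) F p"
  then have p: "p \<in> topspace (prod_topology X Y)" and F: "filter_on (topspace (prod_topology X Y)) F"
    and lim_fst: "filtermap fst F \<le> nhdsin X (fst p)" and lim_snd: "filtermap snd F \<le> nhdsin Y (snd p)"
    unfolding prod_conv_def conv_of_top_def by auto
  have ev_fst: "eventually (\<lambda>x. fst x \<in> U) F" if "openin X U" "fst p \<in> U" for U
    using le_nhdsinD[OF lim_fst that] by (simp add: eventually_filtermap)
  have ev_snd: "eventually (\<lambda>x. snd x \<in> V) F" if "openin Y V" "snd p \<in> V" for V
    using le_nhdsinD[OF lim_snd that] by (simp add: eventually_filtermap)
  have "eventually (\<lambda>x. x \<in> W) F" if W: "openin (prod_topology X Y) W" "p \<in> W" for W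
  proof -
    obtain U V where "openin X U" "openin Y V" "fst p \<in> U" "snd p \<in> V" "U \<times> V \<subseteq> W"
      using openin_prod_topology_alt[THEN iffD1, OF W(1), rule_format, of "fst p" "snd p"] W(2)
      by auto
    then have "eventually (\<lambda>x. fst x \<in> U) F" "eventually (\<lambda>x. snd x \<in> V) F"
      using ev_fst ev_snd by auto
    then show ?thesis by eventually_elim (use \<open>U \<times> V \<subseteq> W\<close> in \<open>auto simp: mem_Times_iff\<close>)
  qed
  then show "conv_of_top (prod_topology X Y) F p"
    using p F by (simp add: conv_of_top_def le_nhdsin_iff)
next
  fix F p assume conv: "conv_of_top (prod_topology X Y) F p"
  then have "conv_of_top X (filtermap fst F) (fst p)" "conv_of_top Y (filtermap snd F) (snd p)"
    using conv_continuous_conv_of_top[OF continuous_map_fst, of X Y]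
      conv_continuous_conv_of_top[OF continuous_map_snd, of X Y]
    unfolding conv_continuous_def by blast+
  moreover have "p \<in> topspace X \<times> topspace Y" "filter_on (topspace X \<times> topspace Y) F"
    using conv unfolding conv_of_top_def by auto
  ultimately show "prod_conv (topspace X) (conv_of_top X) (topspace Y) (conv_of_top Y) F p"
    unfolding prod_conv_def by blast
qed

section \<open>Perfect quotient maps\<close>

lemma openin_quotient_top:
  "openin (quotient_top T q Y) U \<longleftrightarrow> U \<subseteq> Y \<and> openin T {x \<in> topspace T. q x \<in> U}"
proof -
  let ?L = "\<lambda>U. U \<subseteq> Y \<and> openin T {x \<in> topspace T. q x \<in> U}"
  have "istopology ?L"
    unfolding istopology_def
  proof (rule conjI; intro allI impI)
    fix U V assume "?L U" "?L V"
    then have "openin T ({x \<in> topspace T. q x \<in> U} \<inter> {x \<in> topspace T. q x \<in> V})" by auto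
    moreover have "{x \<in> topspace T. q x \<in> U} \<inter> {x \<in> topspace T. q x \<in> V} =
        {x \<in> topspace T. q x \<in> U \<inter> V}" by auto
    ultimately show "?L (U \<inter> V)" using \<open>?L U\<close> by auto
  next
    fix K assume "\<forall>U\<in>K. ?L U"
    then have "openin T (\<Union>U\<in>K. {x \<in> topspace T. q x \<in> U})" by auto
    moreover have "(\<Union>U\<in>K. {x \<in> topspace T. q x \<in> U}) = {x \<in> topspace T. q x \<in> \<Union>K}" by auto
    ultimately show "?L (\<Union>K)" using \<open>\<forall>U\<in>K. ?L U\<close> by auto
  qed
  then show ?thesis unfolding quotient_top_def by simp
qed

lemma topspace_quotient_top:
  assumes "q ` topspace T \<subseteq> Y"
  shows "topspace (quotient_top T q Y) = Y"
proof (rule antisym)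
  show "topspace (quotient_top T q Y) \<subseteq> Y"
    using openin_topspace[of "quotient_top T q Y"] unfolding openin_quotient_top by (rule conjunct1)
  have "{x \<in> topspace T. q x \<in> Y} = topspace T" using assms by auto
  then have "openin (quotient_top T q Y) Y" by (simp add: openin_quotient_top)
  then show "Y \<subseteq> topspace (quotient_top T q Y)" by (rule openin_subset)
qed

lemma quotient_map_quotient_top:
  assumes "q ` topspace T = Y"
  shows "quotient_map T (quotient_top T q Y) q"
  using assms unfolding quotient_map_def by (simp add: topspace_quotient_top openin_quotient_top)

lemma homeomorphic_space_quotient_maps_same_fibres:
  assumes f: "quotient_map X Y f" and g: "quotient_map X Z g"
    and fibres: "\<And>x x'. x \<in> topspace X \<Longrightarrow> x' \<in> topspace X \<Longrightarrow> f x = f x' \<longleftrightarrow> g x = g x'"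
  shows "Y homeomorphic_space Z"
proof -
  obtain G where G: "continuous_map Y Z G" "\<And>x. x \<in> topspace X \<Longrightarrow> G (f x) = g x"
    using quotient_map_lift_exists[OF f quotient_imp_continuous_map[OF g]] fibres by metis
  obtain F where F: "continuous_map Z Y F" "\<And>x. x \<in> topspace X \<Longrightarrow> F (g x) = f x"
    using quotient_map_lift_exists[OF g quotient_imp_continuous_map[OF f]] fibres by metis
  have "F (G y) = y" if "y \<in> topspace Y" for y
    using that G(2) F(2) quotient_imp_surjective_map[OF f] by force
  moreover have "G (F z) = z" if "z \<in> topspace Z" for z
    using that G(2) F(2) quotient_imp_surjective_map[OF g] by force
  ultimately have "homeomorphic_maps Y Z G F"
    unfolding homeomorphic_maps_def using G(1) F(1) by blast
  then show ?thesis unfolding homeomorphic_space_def by blast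
qed

lemma quotient_map_compact_kc_imp_perfect_map:
  assumes "quotient_map T Q q" "compact_space T" "kc_space Q"
  shows "perfect_map T Q q"
  using assms unfolding perfect_map_def
  by (meson continuous_imp_proper_map quotient_imp_continuous_map quotient_imp_surjective_map)

lemma quotient_map_top_of_set_compact:
  fixes g :: "'a::metric_space \<Rightarrow> 'b::metric_space"
  assumes "continuous_on X g" "g ` X = Z" "compact X"
  shows "quotient_map (top_of_set X) (top_of_set Z) g"
proof (rule T1_Spaces.continuous_imp_quotient_map)
  show "continuous_map (top_of_set X) (top_of_set Z) g" using assms(1,2) by auto
  show "compact_space (top_of_set X)" using assms(3) by (simp add: compact_space_subtopology)
  show "Hausdorff_space (top_of_set Z)" by (simp add: Hausdorff_space_subtopology)
qed (use assms(2) in simp)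

lemma le_filtermap_nhdsin_iff:
  assumes "p \<in> topspace T"
  shows "U \<le> filtermap q (nhdsin T p) \<longleftrightarrow>
           (\<forall>V. openin T V \<and> p \<in> V \<longrightarrow> eventually (\<lambda>z. z \<in> q ` V) U)"
proof
  assume le: "U \<le> filtermap q (nhdsin T p)"
  show "\<forall>V. openin T V \<and> p \<in> V \<longrightarrow> eventually (\<lambda>z. z \<in> q ` V) U"
  proof (intro allI impI)
    fix V assume "openin T V \<and> p \<in> V"
    then have "eventually (\<lambda>z. z \<in> q ` V) (filtermap q (nhdsin T p))"
      unfolding eventually_filtermap eventually_nhdsin by blast
    with le show "eventually (\<lambda>z. z \<in> q ` V) U" by (rule filter_leD)
  qed
next
  assume image_nhds: "\<forall>V. openin T V \<and> p \<in> V \<longrightarrow> eventually (\<lambda>z. z \<in> q ` V) U"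
  show "U \<le> filtermap q (nhdsin T p)"
  proof (rule filter_leI)
    fix P assume "eventually P (filtermap q (nhdsin T p))"
    then obtain V where V: "openin T V" "p \<in> V" "\<forall>x\<in>V. P (q x)"
      using assms by (auto simp: eventually_filtermap eventually_nhdsin)
    then have "eventually (\<lambda>z. z \<in> q ` V) U" using image_nhds by blast
    then show "eventually P U" by (rule eventually_mono) (use V(3) in blast)
  qed
qed

lemma ultrafilter_not_le_filtermap_nhdsin:
  assumes U: "ultrafilter_on Y U" and "p \<in> topspace T" "\<not> U \<le> filtermap q (nhdsin T p)"
  obtains V where "openin T V" "p \<in> V" "eventually (\<lambda>z. z \<notin> q ` V) U"
proof -
  obtain V where V: "openin T V" "p \<in> V" and not_in: "\<not> eventually (\<lambda>z. z \<in> q ` V) U"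
    using assms(3) le_filtermap_nhdsin_iff[OF assms(2)] by auto
  have "eventually (\<lambda>z. z \<notin> q ` V) U"
    using ultrafilter_on_eventually_mem_or_not[OF U, of "q ` V"] not_in by simp
  with V show thesis by (rule that)
qed

lemma closed_map_fibre_neighbourhood:
  assumes "closed_map T Q q" "openin T W" "{x \<in> topspace T. q x = y} \<subseteq> W" "y \<in> topspace Q"
  obtains N where "openin Q N" "y \<in> N" "{x \<in> topspace T. q x \<in> N} \<subseteq> W"
proof
  have "closedin T (topspace T - W)" using assms(2) by (rule closedin_diff[OF closedin_topspace])
  then have "closedin Q (q ` (topspace T - W))"
    by (rule assms(1)[unfolded closed_map_def, rule_format])
  then show "openin Q (topspace Q - q ` (topspace T - W))" by (rule openin_diff[OF openin_topspace])
  show "y \<in> topspace Q - q ` (topspace T - W)" using assms(3,4) by auto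
  show "{x \<in> topspace T. q x \<in> topspace Q - q ` (topspace T - W)} \<subseteq> W" by auto
qed

lemma compactin_finite_subcover_image:
  assumes "compactin T K" and V: "\<And>p. p \<in> K \<Longrightarrow> openin T (V p)" "\<And>p. p \<in> K \<Longrightarrow> p \<in> V p"
  obtains F where "F \<subseteq> K" "finite F" "K \<subseteq> \<Union>(V ` F)"
proof -
  obtain \<F> where "finite \<F>" "\<F> \<subseteq> V ` K" "K \<subseteq> \<Union>\<F>"
    using compactinD[of T K "V ` K"] assms by blast
  moreover from finite_subset_image[OF this(1,2)] obtain F where "F \<subseteq> K" "finite F" "\<F> = V ` F"
    by blast
  ultimately show thesis using that by blast
qed

lemma proper_map_ultrafilter_lift:
  assumes proper: "proper_map T Q q" and surj: "q ` topspace T = topspace Q"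
    and U: "ultrafilter_on (topspace Q) U" and lim: "U \<le> nhdsin Q y"
  obtains p where "p \<in> topspace T" "q p = y" "U \<le> filtermap q (nhdsin T p)"
proof -
  have y: "y \<in> topspace Q"
  proof (rule ccontr)
    assume "y \<notin> topspace Q"
    then have "U = bot" using lim by (simp add: bot_unique)
    with ultrafilter_on_neq_bot[OF U] show False ..
  qed
  let ?K = "{x \<in> topspace T. q x = y}"
  have "\<exists>p\<in>?K. U \<le> filtermap q (nhdsin T p)"
  proof (rule ccontr)
    assume no_lift: "\<not> (\<exists>p\<in>?K. U \<le> filtermap q (nhdsin T p))"
    have "\<exists>V. openin T V \<and> p \<in> V \<and> eventually (\<lambda>z. z \<notin> q ` V) U" if p: "p \<in> ?K" for p
    proof -
      have "\<not> U \<le> filtermap q (nhdsin T p)" using no_lift p by blast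
      with U obtain V where "openin T V" "p \<in> V" "eventually (\<lambda>z. z \<notin> q ` V) U"
        using p by (auto elim: ultrafilter_not_le_filtermap_nhdsin)
      then show ?thesis by (intro exI[of _ V] conjI)
    qed
    then have "\<forall>p\<in>?K. \<exists>V. openin T V \<and> p \<in> V \<and> eventually (\<lambda>z. z \<notin> q ` V) U" ..
    from bchoice[OF this] obtain V
      where V: "\<forall>p\<in>?K. openin T (V p) \<and> p \<in> V p \<and> eventually (\<lambda>z. z \<notin> q ` V p) U" ..
    have V_open: "openin T (V p)" and V_mem: "p \<in> V p"
      and V_avoid: "eventually (\<lambda>z. z \<notin> q ` V p) U" if "p \<in> ?K" for p
      using V that by simp_all
    have "compactin T ?K" using proper y by (simp add: proper_map_def)
    then obtain F where F: "F \<subseteq> ?K" "finite F" "?K \<subseteq> \<Union>(V ` F)"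
      using V_open V_mem by (rule compactin_finite_subcover_image)
    have "openin T (\<Union>(V ` F))" by (rule openin_Union) (use F(1) V_open in blast)
    with proper_imp_closed_map[OF proper] obtain N
      where N: "openin Q N" "y \<in> N" "{x \<in> topspace T. q x \<in> N} \<subseteq> \<Union>(V ` F)"
      using F(3) y by (rule closed_map_fibre_neighbourhood)
    have "eventually (\<lambda>z. z \<in> N) U" using lim N(1,2) by (rule le_nhdsinD)
    moreover have "eventually (\<lambda>z. \<forall>p\<in>F. z \<notin> q ` V p) U"
      by (rule eventually_ball_finite[OF F(2)]) (use F(1) V_avoid in blast)
    ultimately have "eventually (\<lambda>_. False) U"
    proof eventually_elim
      fix z assume z: "z \<in> N" and avoid: "\<forall>p\<in>F. z \<notin> q ` V p"
      then obtain x where "x \<in> topspace T" "z = q x"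
        using surj openin_subset[OF N(1)] by blast
      with z N(3) avoid show False by blast
    qed
    with ultrafilter_on_neq_bot[OF U] show False by (simp add: trivial_limit_def)
  qed
  then show thesis using that by blast
qed

lemma quotient_conv_perfect_map:
  assumes perfect: "perfect_map T Q q"
  shows "quotient_conv (topspace T) (conv_of_top T) q (topspace Q) = conv_of_top Q"
proof (intro ext iffI)
  have "conv_continuous (topspace T) (conv_of_top T) (topspace Q) (conv_of_top Q) q"
    using perfect_imp_continuous_map[OF perfect] by (rule conv_continuous_conv_of_top)
  moreover fix G y assume "quotient_conv (topspace T) (conv_of_top T) q (topspace Q) G y"
  ultimately show "conv_of_top Q G y"
    using pstop_conv_of_top unfolding quotient_conv_def by blast
next
  fix G y assume "conv_of_top Q G y"
  then have G: "filter_on (topspace Q) G" and y: "y \<in> topspace Q" and lim: "G \<le> nhdsin Q y"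
    by (simp_all add: conv_of_top_def)
  show "quotient_conv (topspace T) (conv_of_top T) q (topspace Q) G y"
    unfolding quotient_conv_def
  proof (intro conjI allI impI G y)
    fix d assume "pstop (topspace Q) d \<and> conv_continuous (topspace T) (conv_of_top T) (topspace Q) d q"
    then have pstop: "pstop (topspace Q) d"
      and cont: "\<And>F x. conv_of_top T F x \<Longrightarrow> d (filtermap q F) (q x)"
      unfolding conv_continuous_def by blast+
    have "d U y" if U: "ultrafilter_on (topspace Q) U" "U \<le> G" for U
    proof -
      obtain p where p: "p \<in> topspace T" "q p = y" "U \<le> filtermap q (nhdsin T p)"
        using perfect U(1) order_trans[OF U(2) lim]
        by (auto simp: perfect_map_def elim: proper_map_ultrafilter_lift)
      have "d (filtermap q (nhdsin T p)) y" using cont[OF conv_of_top_nhdsin[OF p(1)]] p(2) by simp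
      with pstop ultrafilter_on_imp_filter_on[OF U(1)] p(3) show "d U y"
        unfolding pstop_def conv_space_def by blast
    qed
    then show "d G y" using pstop G y unfolding pstop_def by blast
  qed
qed

section \<open>The suspension of a sphere\<close>

lemma homeomorphism_collapse_vimage:
  assumes hom: "homeomorphism (X - C) (Z - {z}) \<phi> \<psi>" and "z \<in> U"
  shows "X \<inter> (\<lambda>x. if x \<in> C then z else \<phi> x) -` U = X - \<psi> ` (Z - U)"
proof (rule set_eqI)
  have \<psi>_into: "\<psi> ` (Z - U) \<subseteq> X - C"
    using \<open>z \<in> U\<close> homeomorphism_image2[OF hom] by blast
  fix x
  show "x \<in> X \<inter> (\<lambda>x. if x \<in> C then z else \<phi> x) -` U \<longleftrightarrow> x \<in> X - \<psi> ` (Z - U)"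
  proof (cases "x \<in> X - C")
    case True
    then have \<phi>x: "\<phi> x \<in> Z - {z}" "\<psi> (\<phi> x) = x"
      using homeomorphism_image1[OF hom] homeomorphism_apply1[OF hom] by auto
    have "\<phi> x \<in> U \<longleftrightarrow> x \<notin> \<psi> ` (Z - U)"
    proof
      assume "\<phi> x \<in> U"
      show "x \<notin> \<psi> ` (Z - U)"
      proof
        assume "x \<in> \<psi> ` (Z - U)"
        then obtain w where w: "w \<in> Z - U" "x = \<psi> w" by blast
        moreover have "w \<in> Z - {z}" using w(1) \<open>z \<in> U\<close> by auto
        ultimately have "\<phi> x = w" using homeomorphism_apply2[OF hom] by simp
        with w(1) \<open>\<phi> x \<in> U\<close> show False by simp
      qed
    next
      assume "x \<notin> \<psi> ` (Z - U)"
      with \<phi>x show "\<phi> x \<in> U" by (metis Diff_iff image_eqI)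
    qed
    with True show ?thesis by simp
  next
    case False
    with \<psi>_into \<open>z \<in> U\<close> show ?thesis by auto
  qed
qed

lemma continuous_on_collapse_closed:
  fixes \<phi> :: "'a::t2_space \<Rightarrow> 'b::topological_space"
  assumes hom: "homeomorphism (X - C) (Z - {z}) \<phi> \<psi>" and "compact Z" "z \<in> Z"
    and C: "closedin (top_of_set X) C"
  shows "continuous_on X (\<lambda>x. if x \<in> C then z else \<phi> x)" (is "continuous_on X ?g")
proof -
  have \<phi>_into: "\<phi> x \<in> Z - {z}" if "x \<in> X - C" for x
    using homeomorphism_image1[OF hom] that by blast
  have g_into: "?g \<in> X \<rightarrow> Z" using \<phi>_into \<open>z \<in> Z\<close> by auto
  show ?thesis unfolding continuous_on_open_gen[OF g_into]
  proof (intro allI impI)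
    fix U assume U: "openin (top_of_set Z) U"
    show "openin (top_of_set X) (X \<inter> ?g -` U)"
    proof (cases "z \<in> U")
      case False
      then have "openin (top_of_set (Z - {z})) U"
        using U openin_subset[OF U] by (auto intro: openin_subset_trans)
      then have "openin (top_of_set (X - C)) ((X - C) \<inter> \<phi> -` U)"
        using homeomorphism_cont1[OF hom] \<phi>_into by (intro continuous_openin_preimage) auto
      moreover have "openin (top_of_set X) (X - C)"
        using C by (rule openin_diff[OF openin_subtopology_self])
      moreover have "X \<inter> ?g -` U = (X - C) \<inter> \<phi> -` U" using False by (auto split: if_splits)
      ultimately show ?thesis by (auto intro: openin_trans)
    next
      case True
      obtain T where T: "open T" "U = Z \<inter> T" using U by (auto simp: openin_open)
      then have "Z - U = Z \<inter> - T" by auto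
      then have "compact (Z - U)" using \<open>compact Z\<close> \<open>open T\<close> by (simp add: compact_Int_closed closed_Compl)
      moreover have "Z - U \<subseteq> Z - {z}" using True by auto
      ultimately have "compact (\<psi> ` (Z - U))"
        using homeomorphism_cont2[OF hom] by (intro compact_continuous_image) (auto intro: continuous_on_subset)
      then have "closed (\<psi> ` (Z - U))" by (rule compact_imp_closed)
      moreover have "X \<inter> ?g -` U = X \<inter> - \<psi> ` (Z - U)"
        using homeomorphism_collapse_vimage[OF hom True] by auto
      ultimately show ?thesis by (simp add: openin_open_Int open_Compl)
    qed
  qed
qed

lemma homeomorphism_collapse_image_fibres:
  assumes hom: "homeomorphism (X - C) (Z - {z}) \<phi> \<psi>" and "C \<subseteq> X" "C \<noteq> {}" "z \<in> Z"
  defines "g \<equiv> \<lambda>x. if x \<in> C then z else \<phi> x"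
  shows "g ` X = Z"
    and "\<And>x x'. x \<in> X \<Longrightarrow> x' \<in> X \<Longrightarrow> g x = g x' \<longleftrightarrow> x = x' \<or> x \<in> C \<and> x' \<in> C"
proof -
  have \<phi>_into: "\<phi> x \<in> Z - {z}" if "x \<in> X - C" for x
    using homeomorphism_image1[OF hom] that by blast
  show "g ` X = Z"
  proof
    show "g ` X \<subseteq> Z" using \<phi>_into \<open>z \<in> Z\<close> by (auto simp: g_def)
    show "Z \<subseteq> g ` X"
    proof
      fix w assume "w \<in> Z"
      show "w \<in> g ` X"
      proof (cases "w = z")
        case True
        then show ?thesis using \<open>C \<subseteq> X\<close> \<open>C \<noteq> {}\<close> by (force simp: g_def)
      next
        case False
        with \<open>w \<in> Z\<close> have "\<psi> w \<in> X - C" "\<phi> (\<psi> w) = w"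
          using homeomorphism_image2[OF hom] homeomorphism_apply2[OF hom] by auto
        then show ?thesis by (force simp: g_def)
      qed
    qed
  qed
  fix x x' assume "x \<in> X" "x' \<in> X"
  moreover have "\<phi> x = \<phi> x' \<longleftrightarrow> x = x'" if "x \<in> X - C" "x' \<in> X - C" for x x'
    using homeomorphism_apply1[OF hom] that by metis
  ultimately show "g x = g x' \<longleftrightarrow> x = x' \<or> x \<in> C \<and> x' \<in> C"
    using \<phi>_into[of x] \<phi>_into[of x'] unfolding g_def
    by (cases "x \<in> C"; cases "x' \<in> C") auto
qed

lemma homeomorphic_Times:
  assumes "S homeomorphic T" "S' homeomorphic T'"
  shows "(S \<times> S') homeomorphic (T \<times> T')"
proof -
  obtain f g where h: "homeomorphism S T f g" using assms(1) unfolding homeomorphic_def by auto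
  obtain f' g' where h': "homeomorphism S' T' f' g'" using assms(2) unfolding homeomorphic_def by auto
  have "homeomorphism (S \<times> S') (T \<times> T') (\<lambda>p. (f (fst p), f' (snd p))) (\<lambda>p. (g (fst p), g' (snd p)))"
    unfolding homeomorphism_def
  proof (intro conjI)
    show "continuous_on (S \<times> S') (\<lambda>p. (f (fst p), f' (snd p)))"
      using homeomorphism_cont1[OF h] homeomorphism_cont1[OF h']
      by (intro continuous_on_Pair continuous_on_compose2[OF _ continuous_on_fst]
          continuous_on_compose2[OF _ continuous_on_snd]) auto
    show "continuous_on (T \<times> T') (\<lambda>p. (g (fst p), g' (snd p)))"
      using homeomorphism_cont2[OF h] homeomorphism_cont2[OF h']
      by (intro continuous_on_Pair continuous_on_compose2[OF _ continuous_on_fst]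
          continuous_on_compose2[OF _ continuous_on_snd]) auto
    show "(\<lambda>p. (f (fst p), f' (snd p))) ` (S \<times> S') = T \<times> T'"
      using h h' unfolding homeomorphism_def by (force simp: image_iff)
    show "(\<lambda>p. (g (fst p), g' (snd p))) ` (T \<times> T') = S \<times> S'"
      using h h' unfolding homeomorphism_def by (force simp: image_iff)
  qed (use h h' in \<open>auto simp: homeomorphism_def\<close>)
  then show ?thesis unfolding homeomorphic_def by blast
qed

lemma punctured_sphere_Times_homeomorphic:
  fixes b :: "'a::euclidean_space"
  assumes b: "b \<in> sphere 0 1"
  shows "((sphere 0 1 - {b}) \<times> {0<..<(1::real)}) homeomorphic (sphere (0::'a \<times> real) 1 - {(0, 1)})"
proof -
  have "b \<noteq> 0" using b by auto
  have "(sphere 0 1 - {b}) homeomorphic {x::'a. b \<bullet> x = 0}"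
    by (rule homeomorphic_punctured_sphere_hyperplane) (use b \<open>b \<noteq> 0\<close> in auto)
  moreover have "{0<..<(1::real)} homeomorphic (UNIV::real set)"
    using homeomorphic_ball_UNIV[of "1/2::real" "1/2"] by (simp add: greaterThanLessThan_eq_ball)
  ultimately have "((sphere 0 1 - {b}) \<times> {0<..<(1::real)}) homeomorphic ({x::'a. b \<bullet> x = 0} \<times> (UNIV::real set))"
    by (rule homeomorphic_Times)
  also have "{x::'a. b \<bullet> x = 0} \<times> (UNIV::real set) = {p::'a \<times> real. (b, 0) \<bullet> p = 0}"
    by (auto simp: inner_Pair_0)
  also have "\<dots> homeomorphic (sphere (0::'a \<times> real) 1 - {(0, 1)})"
    by (rule homeomorphic_sym[THEN iffD1], rule homeomorphic_punctured_sphere_hyperplane)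
      (use \<open>b \<noteq> 0\<close> in \<open>auto simp: zero_prod_def dist_Pair_Pair\<close>)
  finally show ?thesis .
qed

lemma susp_quot_eq_iff:
  assumes "x \<in> S \<times> {0..1}" "x' \<in> S \<times> {0..1}"
  shows "susp_quot S b x = susp_quot S b x' \<longleftrightarrow>
           x = x' \<or> x \<in> susp_collapsed S b \<and> x' \<in> susp_collapsed S b"
  using assms unfolding susp_quot_def susp_rel_def by (auto simp: set_eq_iff) blast+

lemma susp_quot_image: "susp_quot S b ` (S \<times> {0..1}) = susp_space S b"
  unfolding susp_quot_def susp_space_def quotient_def by auto

lemma susp_collapsed_subset: "b \<in> S \<Longrightarrow> susp_collapsed S b \<subseteq> S \<times> {0..1}"
  unfolding susp_collapsed_def by auto

lemma compact_susp_collapsed: "compact S \<Longrightarrow> compact (susp_collapsed S b)"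
  unfolding susp_collapsed_def
  by (intro compact_Un compact_Times compact_Icc) (simp_all add: finite_imp_compact)

lemma Times_Icc_minus_susp_collapsed:
  "S \<times> {0..1} - susp_collapsed S b = (S - {b}) \<times> {0<..<1}"
  unfolding susp_collapsed_def by auto

lemma suspension_sphere_map:
  fixes b :: "'a::euclidean_space"
  assumes b: "b \<in> sphere 0 1"
  defines "X \<equiv> sphere (0::'a) 1 \<times> {0..1::real}"
  obtains g :: "'a \<times> real \<Rightarrow> 'a \<times> real"
  where "continuous_on X g" "g ` X = sphere 0 1"
    "\<And>x x'. x \<in> X \<Longrightarrow> x' \<in> X \<Longrightarrow> g x = g x' \<longleftrightarrow> susp_quot (sphere 0 1) b x = susp_quot (sphere 0 1) b x'"
proof -
  let ?C = "susp_collapsed (sphere 0 1) b" and ?N = "(0::'a, 1::real)"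
  have N: "?N \<in> sphere 0 1" by (simp add: dist_Pair_Pair)
  have "(X - ?C) homeomorphic (sphere 0 1 - {?N})"
    unfolding X_def Times_Icc_minus_susp_collapsed by (rule punctured_sphere_Times_homeomorphic[OF b])
  then obtain \<phi> \<psi> where hom: "homeomorphism (X - ?C) (sphere 0 1 - {?N}) \<phi> \<psi>"
    unfolding homeomorphic_def by blast
  have C: "?C \<subseteq> X" "?C \<noteq> {}" unfolding X_def using b susp_collapsed_subset
    by (auto simp: susp_collapsed_def)
  have "closed ?C" by (intro compact_imp_closed compact_susp_collapsed compact_sphere)
  with C(1) have "closedin (top_of_set X) ?C" by (rule closed_subset)
  with hom have "continuous_on X (\<lambda>x. if x \<in> ?C then ?N else \<phi> x)"
    using N by (intro continuous_on_collapse_closed) auto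
  moreover note homeomorphism_collapse_image_fibres[OF hom C N]
  moreover have "susp_quot (sphere 0 1) b x = susp_quot (sphere 0 1) b x' \<longleftrightarrow> x = x' \<or> x \<in> ?C \<and> x' \<in> ?C"
    if "x \<in> X" "x' \<in> X" for x x'
    using that unfolding X_def by (rule susp_quot_eq_iff)
  ultimately show thesis using that by simp
qed

lemma suspension_quotient_top:
  fixes b :: "'a::euclidean_space"
  assumes "b \<in> sphere 0 1"
  defines "T \<equiv> prod_topology (top_of_set (sphere (0::'a) 1)) (top_of_set {0..1::real})"
  defines "Q \<equiv> quotient_top T (susp_quot (sphere 0 1) b) (susp_space (sphere 0 1) b)"
  shows "perfect_map T Q (susp_quot (sphere 0 1) b)"
    and "Q homeomorphic_space top_of_set (sphere (0::'a \<times> real) 1)"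
proof -
  let ?X = "sphere (0::'a) 1 \<times> {0..1::real}"
  have T: "T = top_of_set ?X" by (simp add: T_def)
  have q: "quotient_map T Q (susp_quot (sphere 0 1) b)"
    unfolding Q_def by (rule quotient_map_quotient_top) (simp add: T susp_quot_image)
  obtain g :: "'a \<times> real \<Rightarrow> 'a \<times> real" where g: "continuous_on ?X g" "g ` ?X = sphere 0 1"
    and fibres: "\<And>x x'. x \<in> ?X \<Longrightarrow> x' \<in> ?X \<Longrightarrow>
                   g x = g x' \<longleftrightarrow> susp_quot (sphere 0 1) b x = susp_quot (sphere 0 1) b x'"
    using suspension_sphere_map[OF assms(1)] by blast
  have "compact ?X" by (intro compact_Times compact_sphere compact_Icc)
  with g have "quotient_map T (top_of_set (sphere 0 1)) g"
    unfolding T by (rule quotient_map_top_of_set_compact)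
  with q show hom: "Q homeomorphic_space top_of_set (sphere (0::'a \<times> real) 1)"
    by (rule homeomorphic_space_quotient_maps_same_fibres) (simp add: T fibres)
  have "compact_space T" unfolding T using \<open>compact ?X\<close> by (simp add: compact_space_subtopology)
  moreover have "kc_space Q"
    using homeomorphic_kc_space[OF hom] kc_space_subtopology[OF kc_space_euclidean] by simp
  ultimately show "perfect_map T Q (susp_quot (sphere 0 1) b)"
    by (rule quotient_map_compact_kc_imp_perfect_map[OF q])
qed

theorem mainTheorem6:
  fixes b :: "'a :: euclidean_space"
  assumes "b \<in> sphere 0 1"
  defines "S \<equiv> sphere (0::'a) 1"
  defines "X \<equiv> S \<times> {0..(1::real)}"
  defines "c \<equiv> prod_conv S (conv_of_top (top_of_set S))
                         {0..1} (conv_of_top (top_of_set {0..(1::real)}))"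
  shows "quotient_conv X c (susp_quot S b) (susp_space S b)
           = conv_of_top (quotient_top (prod_topology (top_of_set S) (top_of_set {0..1}))
                                       (susp_quot S b) (susp_space S b))
       \<and> conv_homeomorphic (susp_space S b) (quotient_conv X c (susp_quot S b) (susp_space S b))
            (sphere (0::'a \<times> real) 1) (conv_of_top (top_of_set (sphere (0::'a \<times> real) 1)))"
proof -
  let ?T = "prod_topology (top_of_set S) (top_of_set {0..1::real})"
  let ?Q = "quotient_top ?T (susp_quot S b) (susp_space S b)"
  have c: "c = conv_of_top ?T"
    using prod_conv_conv_of_top[of "top_of_set S" "top_of_set {0..1::real}"] by (simp add: c_def)
  have perfect: "perfect_map ?T ?Q (susp_quot S b)"
    and hom: "?Q homeomorphic_space top_of_set (sphere (0::'a \<times> real) 1)"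
    using suspension_quotient_top[OF assms(1)] unfolding S_def by blast+
  have "topspace ?T = X" by (simp add: X_def)
  moreover have "topspace ?Q = susp_space S b"
    using quotient_imp_surjective_map[OF perfect_imp_quotient_map[OF perfect]]
    by (simp add: susp_quot_image)
  ultimately have "quotient_conv X c (susp_quot S b) (susp_space S b) = conv_of_top ?Q"
    using quotient_conv_perfect_map[OF perfect] by (simp add: c)
  then show ?thesis using conv_homeomorphic_conv_of_top[OF hom] \<open>topspace ?Q = susp_space S b\<close> by simp
qed

end
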